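(* Let $q$ be a prime power, let $m, c, h, M$ be positive integers and $\gamma \geq 0$ a real number with $c < \frac{(m-1) - m\gamma}{m} M$. Let $r_1, \ldots, r_m : \mathbb{F}_q \to \mathbb{F}_q$ be functions with $$\left|\{\alpha \in \mathbb{F}_q : r_i(\alpha) \neq r_j(\alpha) \text{ for some } i, j\}\right| \leq \gamma q.$$ Suppose $F_1(X), \ldots, F_m(X) \in \mathbb{F}_q[X]$ satisfy $\deg(F_i) < cq$ and each $F_i$ is an $r_i$-twisted $(h,M)$-pseudopolynomial. Let $k$ be an integer with $$k > \frac{M}{(m - 1 - m\gamma)M - mc}\cdot (h+1).$$ Then there exist $k$-pseudopolynomials $A_1(X), \ldots, A_m(X) \in \mathbb{F}_q[X]$ with $\deg(A_i) < Mq$, not all zero, such that $$\sum_{i=1}^m A_i(X) F_i(X) = 0.$$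
   Context: For $A(X) \in \mathbb{F}_q[X]$, $A^{[\ell]}(X)$ is the $\ell$-th Hasse derivative (the coefficient of $Z^\ell$ in $A(X+Z)$ expanded in powers of $Z$). With $\Lambda(X) = X^q - X$, the $\ell$-th pseudoderivative is $A_{\langle \ell \rangle}(X) = A^{[\ell]}(X) \bmod \Lambda(X)$. The pseudodegree is $\mathsf{pdeg}(A) = \max_{\ell \geq 0}\deg(A_{\langle\ell\rangle})$, and $A$ is a $k$-pseudopolynomial if $\mathsf{pdeg}(A) \leq k$. Given $r : \mathbb{F}_q \to \mathbb{F}_q$, a polynomial $F(X)$ is an $r$-twisted $(h,M)$-pseudopolynomial if for every $\ell$ with $0 \leq \ell < M$ there is $U_\ell(X) \in \mathbb{F}_q[X]$ of degree at most $h$ with $F^{[\ell]}(\alpha) = r(\alpha)\cdot U_\ell(\alpha)$ for all $\alpha \in \mathbb{F}_q$. *)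

theory Defs
  imports "HOL-Computational_Algebra.Polynomial" "HOL-Library.Cardinality" Complex_Main
begin

text \<open>A(X+Z) as a polynomial in Z whose coefficients are polynomials in X.\<close>
definition shift_poly :: "'a::comm_ring_1 poly \<Rightarrow> 'a poly poly" where
  "shift_poly A = pcompose (map_poly (\<lambda>c. [:c:]) A) [: [:0, 1:], 1 :]"

definition hasse :: "nat \<Rightarrow> 'a::comm_ring_1 poly \<Rightarrow> 'a poly" where
  "hasse l A = coeff (shift_poly A) l"

definition Lam :: "'a::{finite,field} poly" where
  "Lam = monom 1 (CARD('a)) - [:0, 1:]"

definition pseudoderiv :: "nat \<Rightarrow> 'a::{finite,field} poly \<Rightarrow> 'a poly" where
  "pseudoderiv l A = hasse l A mod Lam"

definition pseudopoly :: "int \<Rightarrow> 'a::{finite,field} poly \<Rightarrow> bool" where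
  "pseudopoly k A \<longleftrightarrow> (\<forall>l. int (degree (pseudoderiv l A)) \<le> k)"

definition twisted_pseudopoly ::
  "('a::{finite,field} \<Rightarrow> 'a) \<Rightarrow> nat \<Rightarrow> nat \<Rightarrow> 'a poly \<Rightarrow> bool" where
  "twisted_pseudopoly r h M F \<longleftrightarrow>
     (\<forall>l<M. \<exists>U. degree U \<le> h \<and> (\<forall>\<alpha>. poly (hasse l F) \<alpha> = r \<alpha> * poly U \<alpha>))"

end

theory Submission
  imports Defs "HOL-Library.FuncSet"
begin

text \<open>
  Let \<open>S\<close> be the set of points where all twists \<open>r_i\<close> agree, so \<open>|S| \<ge> (1 - \<gamma>) q\<close>,
  and let \<open>D = M |S| - c q\<close>. The polynomials \<open>X^a \<Lambda>^j\<close> with \<open>a \<le> k\<close> and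
  \<open>a + j q < D\<close> are \<open>k\<close>-pseudopolynomials of pairwise distinct degrees below \<open>D\<close>.
  Writing \<open>F_i^[l] = r_i U_{i,l}\<close> on \<open>\<bbbF>_q\<close>, the Leibniz rule gives at every \<open>\<alpha> \<in> S\<close>
  \<open>(\<Sum>_i A_i F_i)^[l] (\<alpha>) = r(\<alpha>) \<cdot> (\<Sum>_i \<Sum>_{a \<le> l} A_i\<langle>a\<rangle> U_{i,l-a}) (\<alpha>)\<close>,
  and the polynomial in brackets has degree at most \<open>k + h\<close>. For \<open>l < M\<close> these are fewer
  conditions than there are coefficients in combinations of the \<open>X^a \<Lambda>^j\<close>, so by pigeonhole
  some nonzero choice of the \<open>A_i\<close> makes all of them vanish. Then \<open>\<Sum>_i A_i F_i\<close> vanishes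
  to order \<open>M\<close> at every point of \<open>S\<close> but has degree below \<open>D + c q = M |S|\<close>, so it is
  zero. If \<open>k \<ge> q - 1\<close>, every polynomial is a \<open>k\<close>-pseudopolynomial and the syzygy
  \<open>F_2 F_1 - F_1 F_2 = 0\<close> suffices.
\<close>

section \<open>Finite fields\<close>

lemma two_le_card_finite_field: "2 \<le> CARD('a::{finite,field})"
proof -
  have "card {0, 1::'a} \<le> CARD('a)"
    by (intro card_mono) auto
  then show ?thesis
    by simp
qed

lemma finite_field_power_card:
  fixes x :: "'a::{finite,field}"
  shows "x ^ CARD('a) = x"
proof (cases "x = 0")
  case True
  then show ?thesis
    using two_le_card_finite_field[where 'a='a] by simp
next
  case False
  define U where "U = (UNIV - {0} :: 'a set)"
  have "(\<Prod>y\<in>U. x * y) = (\<Prod>y\<in>U. y)"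
    \<comment> \<open>multiplication by \<open>x\<close> permutes the nonzero elements\<close>
    by (rule prod.reindex_bij_witness[of _ "\<lambda>y. y / x" "\<lambda>y. x * y"])
      (use False in \<open>auto simp: U_def\<close>)
  moreover have "(\<Prod>y\<in>U. x * y) = x ^ card U * (\<Prod>y\<in>U. y)"
    by (simp add: prod.distrib)
  moreover have "(\<Prod>y\<in>U. y) \<noteq> 0"
    by (simp add: U_def)
  ultimately have "x ^ card U = 1"
    by simp
  moreover have "CARD('a) = Suc (card U)"
    unfolding U_def using card_Suc_Diff1[of UNIV "0::'a"] by simp
  ultimately show ?thesis
    by simp
qed

text \<open>
  The polynomial \<open>(X + 1)^q - X^q - 1\<close> has degree less than \<open>q\<close> but vanishes on all \<open>q\<close>
  elements of the field, so all its coefficients are zero.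
\<close>
lemma binomial_card_eq_0:
  assumes "0 < l" "l < CARD('a::{finite,field})"
  shows "of_nat (CARD('a) choose l) = (0::'a)"
proof -
  define q where "q = CARD('a)"
  define P :: "'a poly" where "P = ([:0, 1:] + 1) ^ q - monom 1 q - 1"
  have coeff_P: "coeff P i = (if i \<le> q then of_nat (q choose i) else 0)
      - (if i = q then 1 else 0) - (if i = 0 then 1 else 0)" for i
  proof -
    have "([:0, 1:] + 1) ^ q = (\<Sum>k\<le>q. monom (of_nat (q choose k)) k :: 'a poly)"
      by (simp add: binomial_ring monom_altdef of_nat_poly)
    then show ?thesis
      by (simp add: P_def coeff_sum coeff_monom coeff_1)
  qed
  have "P = 0"
  proof (rule ccontr)
    assume "P \<noteq> 0"
    have "q > 0"
      using two_le_card_finite_field[where 'a='a] by (simp add: q_def)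
    then have "\<forall>i\<ge>q. coeff P i = 0"
      using coeff_P by auto
    then have "degree P < q"
      using \<open>P \<noteq> 0\<close> by (metis leading_coeff_0_iff le_degree not_less)
    moreover have "poly P x = 0" for x
      using finite_field_power_card[of x] finite_field_power_card[of "x + 1"]
      by (simp add: P_def poly_monom q_def)
    then have "card {x. poly P x = 0} = q"
      by (simp add: q_def)
    ultimately show False
      using card_poly_roots_bound[OF \<open>P \<noteq> 0\<close>] by simp
  qed
  then show ?thesis
    using coeff_P[of l] assms by (simp add: q_def)
qed

lemma add_power_card_poly_poly:
  fixes x y :: "'a::{finite,field} poly poly"
  shows "(x + y) ^ CARD('a) = x ^ CARD('a) + y ^ CARD('a)"
proof -
  define q where "q = CARD('a)"
  have "(x + y) ^ q = (\<Sum>l\<le>q. of_nat (q choose l) * x ^ l * y ^ (q - l))"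
    by (rule binomial_ring)
  also have "\<dots> = (\<Sum>l\<in>{0, q}. of_nat (q choose l) * x ^ l * y ^ (q - l))"
  proof (rule sum.mono_neutral_right)
    show "\<forall>l\<in>{..q} - {0, q}. of_nat (q choose l) * x ^ l * y ^ (q - l) = 0"
      using binomial_card_eq_0[where 'a='a] by (auto simp: q_def of_nat_poly)
  qed auto
  finally show ?thesis
    using two_le_card_finite_field[where 'a='a] by (simp add: q_def add.commute)
qed

section \<open>Hasse derivatives\<close>

lemma map_poly_add_hom:
  assumes "\<And>x y. f (x + y) = f x + f y" "f 0 = 0"
  shows "map_poly f (p + q) = map_poly f p + map_poly f q"
  by (intro poly_eqI) (simp add: coeff_map_poly assms)

lemma map_poly_mult_hom:
  fixes f :: "'a::comm_semiring_1 \<Rightarrow> 'b::comm_semiring_1"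
  assumes add: "\<And>x y. f (x + y) = f x + f y"
    and mult: "\<And>x y. f (x * y) = f x * f y" and zero: "f 0 = 0"
  shows "map_poly f (p * q) = map_poly f p * map_poly f q"
proof (induction p)
  case (pCons a p)
  then show ?case
    by (simp add: mult_pCons_left map_poly_add_hom[OF add zero] map_poly_smult[OF zero mult]
        map_poly_pCons zero)
qed simp

lemma map_poly_pcompose_hom:
  fixes f :: "'a::comm_semiring_1 \<Rightarrow> 'b::comm_semiring_1"
  assumes add: "\<And>x y. f (x + y) = f x + f y"
    and mult: "\<And>x y. f (x * y) = f x * f y" and zero: "f 0 = 0"
  shows "map_poly f (pcompose p q) = pcompose (map_poly f p) (map_poly f q)"
proof (induction p)
  case (pCons a p)
  then show ?case
    by (simp add: pcompose_pCons map_poly_add_hom[OF add zero] map_poly_mult_hom[OF add mult zero]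
        map_poly_pCons zero)
qed simp

lemma shift_poly_add: "shift_poly (p + q) = shift_poly p + shift_poly q"
  unfolding shift_poly_def by (simp add: map_poly_add_hom pcompose_add)

lemma shift_poly_diff: "shift_poly (p - q) = shift_poly p - shift_poly q"
  by (metis add_diff_cancel diff_add_cancel shift_poly_add)

lemma shift_poly_mult: "shift_poly (p * q) = shift_poly p * shift_poly q"
  unfolding shift_poly_def by (simp add: map_poly_mult_hom pcompose_mult)

lemma shift_poly_smult: "shift_poly (smult a p) = smult [:a:] (shift_poly p)"
  unfolding shift_poly_def by (simp add: map_poly_smult pcompose_smult)

lemma shift_poly_power: "shift_poly (p ^ n) = shift_poly p ^ n"
  by (induction n) (simp_all add: shift_poly_mult shift_poly_def [of 1] pcompose_1)

lemma shift_poly_X: "shift_poly [:0, 1:] = [:[:0, 1:], 1:]"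
  unfolding shift_poly_def by (simp add: map_poly_pCons pcompose_pCons)

lemma hasse_add: "hasse l (p + q) = hasse l p + hasse l q"
  unfolding hasse_def by (simp add: shift_poly_add)

lemma hasse_diff: "hasse l (p - q) = hasse l p - hasse l q"
  unfolding hasse_def by (simp add: shift_poly_diff)

lemma hasse_smult: "hasse l (smult a p) = smult a (hasse l p)"
  unfolding hasse_def by (simp add: shift_poly_smult)

lemma hasse_sum: "hasse l (sum f A) = (\<Sum>x\<in>A. hasse l (f x))"
  by (induction A rule: infinite_finite_induct)
    (simp_all add: hasse_add hasse_def [of _ 0] shift_poly_def [of 0])

lemma hasse_mult: "hasse l (p * q) = (\<Sum>i\<le>l. hasse i p * hasse (l - i) q)"
  unfolding hasse_def by (simp add: shift_poly_mult coeff_mult)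

lemma coeff_pcompose_shift_eq_poly_hasse:
  "coeff (pcompose p [:a, 1:]) l = poly (hasse l p) a"
proof -
  define ev where "ev = (\<lambda>p. poly p a)"
  have ev_hom: "ev (x + y) = ev x + ev y" "ev (x * y) = ev x * ev y" "ev 0 = 0" for x y
    by (simp_all add: ev_def)
  have "map_poly ev (shift_poly p) = pcompose (map_poly ev (map_poly (\<lambda>c. [:c:]) p))
      (map_poly ev [:[:0, 1:], 1:])"
    unfolding shift_poly_def by (rule map_poly_pcompose_hom[OF ev_hom])
  also have "\<dots> = pcompose p [:a, 1:]"
    by (simp add: map_poly_map_poly ev_def o_def map_poly_pCons)
  finally show ?thesis
    by (metis coeff_map_poly ev_def ev_hom(3) hasse_def)
qed

lemma linear_power_dvd_if_hasse_vanish: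
  assumes "\<forall>l<M. poly (hasse l p) a = 0"
  shows "[:-a, 1:] ^ M dvd p"
proof -
  have "monom 1 M dvd pcompose p [:a, 1:]"
    using assms by (simp add: monom_1_dvd_iff' coeff_pcompose_shift_eq_poly_hasse)
  then obtain T where T: "pcompose p [:a, 1:] = [:0, 1:] ^ M * T"
    by (auto simp: monom_altdef elim: dvdE)
  have "p = pcompose (pcompose p [:a, 1:]) [:-a, 1:]"
    by (simp add: pcompose_assoc[symmetric] pcompose_pCons)
  also have "\<dots> = pcompose ([:0, 1:] ^ M) [:-a, 1:] * pcompose T [:-a, 1:]"
    by (simp add: T pcompose_mult)
  also have "pcompose ([:0, 1:] ^ M) [:-a, 1:] = [:-a, 1:] ^ M"
    by (induction M) (simp_all add: pcompose_mult pcompose_1 pcompose_pCons)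
  finally show ?thesis
    by (metis dvd_triv_left)
qed

lemma mult_card_le_degree_if_order_ge:
  fixes p :: "'a::idom poly"
  assumes "p \<noteq> 0" "finite S" "\<And>x. x \<in> S \<Longrightarrow> M \<le> order x p"
  shows "M * card S \<le> degree p"
proof (cases "M = 0")
  case False
  then have "S \<subseteq> {x. poly p x = 0}"
    using assms by (auto simp: order_root intro: less_le_trans[of 0 M])
  have "M * card S = (\<Sum>x\<in>S. M)"
    by simp
  also have "\<dots> \<le> (\<Sum>x\<in>S. order x p)"
    using assms(3) by (rule sum_mono)
  also have "\<dots> \<le> (\<Sum>x | poly p x = 0. order x p)"
    using \<open>S \<subseteq> _\<close> poly_roots_finite[OF assms(1)] by (intro sum_mono2) auto
  also have "\<dots> \<le> degree p"
    using assms(1) by (rule sum_order_le_degree)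
  finally show ?thesis .
qed simp

section \<open>Pseudoderivatives\<close>

lemma Lam_eq: "(Lam :: 'a::{finite,field} poly) = [:0, 1:] ^ CARD('a) - [:0, 1:]"
  unfolding Lam_def by (simp add: monom_altdef)

lemma degree_Lam: "degree (Lam :: 'a::{finite,field} poly) = CARD('a)"
proof -
  have "degree ([:0, 1:] :: 'a poly) < degree (monom (1::'a) CARD('a))"
    using two_le_card_finite_field[where 'a='a] by (simp add: degree_monom_eq)
  then show ?thesis
    unfolding Lam_def diff_conv_add_uminus by (simp add: degree_add_eq_left degree_monom_eq)
qed

lemma Lam_nonzero: "(Lam :: 'a::{finite,field} poly) \<noteq> 0"
  using degree_Lam[where 'a='a] two_le_card_finite_field[where 'a='a] by auto

lemma poly_Lam: "poly (Lam :: 'a::{finite,field} poly) x = 0"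
  unfolding Lam_def by (simp add: poly_monom finite_field_power_card)

lemma poly_pseudoderiv: "poly (pseudoderiv l p) x = poly (hasse l p) x"
  unfolding pseudoderiv_def by (simp add: poly_mod poly_Lam)

lemma pseudoderiv_add: "pseudoderiv l (p + q) = pseudoderiv l p + pseudoderiv l q"
  unfolding pseudoderiv_def by (simp add: hasse_add poly_mod_add_left)

lemma pseudoderiv_diff: "pseudoderiv l (p - q) = pseudoderiv l p - pseudoderiv l q"
  unfolding pseudoderiv_def by (simp add: hasse_diff poly_mod_diff_left)

lemma pseudoderiv_smult: "pseudoderiv l (smult a p) = smult a (pseudoderiv l p)"
  unfolding pseudoderiv_def by (simp add: hasse_smult mod_smult_left)

lemma pseudoderiv_sum: "pseudoderiv l (sum f A) = (\<Sum>x\<in>A. pseudoderiv l (f x))"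
  by (induction A rule: infinite_finite_induct)
    (simp_all add: pseudoderiv_add pseudoderiv_def [of _ 0] hasse_def [of _ 0] shift_poly_def [of 0])

lemma pseudopoly_if_card_le:
  assumes "int CARD('a::{finite,field}) - 1 \<le> k"
  shows "pseudopoly k (p :: 'a poly)"
  unfolding pseudopoly_def
proof
  fix l
  have "degree (pseudoderiv l p) < CARD('a)"
    using degree_mod_less[OF Lam_nonzero, of "hasse l p"] two_le_card_finite_field[where 'a='a]
    by (auto simp: pseudoderiv_def degree_Lam)
  then show "int (degree (pseudoderiv l p)) \<le> k"
    using assms by linarith
qed

lemma exists_syzygy_of_two:
  fixes F :: "'i \<Rightarrow> 'a::comm_ring_1 poly"
  assumes "finite I" "i \<in> I" "j \<in> I" "i \<noteq> j" "\<forall>l\<in>I. degree (F l) < N"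
  shows "\<exists>A. (\<forall>l\<in>I. degree (A l) < N) \<and> (\<exists>l\<in>I. A l \<noteq> 0) \<and> (\<Sum>l\<in>I. A l * F l) = 0"
proof (cases "F i = 0")
  case True
  define A where "A l = (if l = i then 1 else 0 :: 'a poly)" for l
  have "(\<Sum>l\<in>I. A l * F l) = 0"
    using True by (intro sum.neutral) (simp add: A_def)
  then show ?thesis
    using True assms(2,5) by (intro exI[of _ A]) (auto simp: A_def)
next
  case False
  define A where "A l = (if l = i then F j else if l = j then - F i else 0)" for l
  have "(\<Sum>l\<in>I. A l * F l) = (\<Sum>l\<in>{i, j}. A l * F l)"
    using assms by (intro sum.mono_neutral_right) (auto simp: A_def)
  also have "\<dots> = 0"
    using assms(4) by (simp add: A_def mult.commute)
  finally show ?thesis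
    using False assms(2-5) by (intro exI[of _ A]) (auto simp: A_def)
qed

definition coeff_degree_le :: "nat \<Rightarrow> 'a::zero poly poly \<Rightarrow> bool" where
  "coeff_degree_le d P \<longleftrightarrow> (\<forall>l. degree (coeff P l) \<le> d)"

lemma coeff_degree_le_mult:
  assumes "coeff_degree_le d P" "coeff_degree_le e Q"
  shows "coeff_degree_le (d + e) (P * Q :: 'a::comm_semiring_1 poly poly)"
  unfolding coeff_degree_le_def coeff_mult
proof (intro allI degree_sum_le)
  fix l i
  have "degree (coeff P i * coeff Q (l - i)) \<le> degree (coeff P i) + degree (coeff Q (l - i))"
    by (rule degree_mult_le)
  also have "\<dots> \<le> d + e"
    using assms unfolding coeff_degree_le_def by (meson add_mono)
  finally show "degree (coeff P i * coeff Q (l - i)) \<le> d + e" .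
qed simp

lemma coeff_degree_le_power:
  "coeff_degree_le d P \<Longrightarrow> coeff_degree_le (n * d) (P ^ n :: 'a::comm_semiring_1 poly poly)"
proof (induction n)
  case 0
  then show ?case
    by (simp add: coeff_degree_le_def coeff_1)
next
  case (Suc n)
  then show ?case
    using coeff_degree_le_mult[of d P "n * d" "P ^ n"] by simp
qed

lemma shift_poly_Lam:
  "shift_poly (Lam :: 'a::{finite,field} poly) = [:Lam:] + ([:0, 1:] ^ CARD('a) - [:0, 1:])"
proof -
  have "shift_poly (Lam :: 'a poly) = [:[:0, 1:], 1:] ^ CARD('a) - [:[:0, 1:], 1:]"
    unfolding Lam_eq by (simp add: shift_poly_diff shift_poly_power shift_poly_X)
  also have "[:[:0, 1:], 1:] ^ CARD('a) = [:[:0, 1:]:] ^ CARD('a) + ([:0, 1:] :: 'a poly poly) ^ CARD('a)"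
    using add_power_card_poly_poly[of "[:[:0, 1:]:]" "[:0, 1:]"] by simp
  finally show ?thesis
    unfolding Lam_eq by (simp add: poly_const_pow)
qed

lemma coeff_degree_le_shift_X: "coeff_degree_le 1 ([:[:0, 1:], 1:] :: 'a::comm_semiring_1 poly poly)"
  unfolding coeff_degree_le_def by (auto simp: coeff_pCons split: nat.split)

lemma coeff_degree_le_X_power_minus_X:
  "coeff_degree_le 0 ([:0, 1:] ^ n - [:0, 1:] :: 'a::comm_ring_1 poly poly)"
  unfolding coeff_degree_le_def
proof
  fix l
  have "([:0, 1:] :: 'a poly poly) ^ n = monom 1 n"
    by (simp add: monom_altdef)
  then have "coeff ([:0, 1:] ^ n - [:0, 1:] :: 'a poly poly) l
      = (if n = l then 1 else 0) - coeff [:0, 1:] l"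
    by (simp add: coeff_monom)
  then show "degree (coeff ([:0, 1:] ^ n - [:0, 1:] :: 'a poly poly) l) \<le> 0"
    by (auto intro!: degree_diff_le simp: coeff_pCons split: nat.split)
qed

definition XLam :: "nat \<times> nat \<Rightarrow> 'a::{finite,field} poly" where
  "XLam t = [:0, 1:] ^ fst t * Lam ^ snd t"

text \<open>
  Modulo \<open>\<Lambda>\<close>, the shift \<open>\<Lambda>(X + Z) = \<Lambda>(X) + (Z^q - Z)\<close> is congruent to a polynomial
  in \<open>Z\<close> alone, so the Hasse derivatives of \<open>X^a \<Lambda>^j\<close> are congruent to polynomials of degree
  at most \<open>a\<close>.
\<close>
lemma degree_pseudoderiv_XLam:
  assumes "a < CARD('a::{finite,field})"
  shows "degree (pseudoderiv l (XLam (a, j) :: 'a poly)) \<le> a"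
proof -
  define W :: "'a poly poly" where "W = [:[:0, 1:], 1:]"
  define Z :: "'a poly poly" where "Z = [:0, 1:] ^ CARD('a) - [:0, 1:]"
  obtain R where R: "([:Lam:] + Z) ^ j = Z ^ j + [:Lam:] * R"
    using power_diff_sumr2[of "[:Lam:] + Z" j Z] by (simp add: diff_eq_eq add.commute)
  have "shift_poly (XLam (a, j)) = W ^ a * ([:Lam:] + Z) ^ j"
    by (simp add: XLam_def shift_poly_mult shift_poly_power shift_poly_X shift_poly_Lam W_def Z_def)
  also have "\<dots> = W ^ a * Z ^ j + smult Lam (W ^ a * R)"
    by (simp add: R distrib_left mult.left_commute)
  finally have "hasse l (XLam (a, j)) = coeff (W ^ a * Z ^ j) l + Lam * coeff (W ^ a * R) l"
    by (simp add: hasse_def)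
  then have "pseudoderiv l (XLam (a, j)) = coeff (W ^ a * Z ^ j) l mod Lam"
    by (simp add: pseudoderiv_def poly_mod_add_left)
  moreover have "coeff_degree_le (a * 1 + j * 0) (W ^ a * Z ^ j)"
    unfolding W_def Z_def
    by (intro coeff_degree_le_mult coeff_degree_le_power coeff_degree_le_shift_X
        coeff_degree_le_X_power_minus_X)
  then have "degree (coeff (W ^ a * Z ^ j) l) \<le> a"
    by (simp add: coeff_degree_le_def)
  ultimately show ?thesis
    using assms by (simp add: mod_poly_less degree_Lam)
qed

section \<open>Combinations of the polynomials \<open>X\<^sup>a \<Lambda>\<^sup>j\<close>\<close>

lemma sum_smult_distinct_degrees_eq_0D:
  fixes b :: "'t \<Rightarrow> 'a::field poly"
  assumes "finite J" "\<forall>t\<in>J. b t \<noteq> 0" "inj_on (\<lambda>t. degree (b t)) J"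
    and "(\<Sum>t\<in>J. smult (c t) (b t)) = 0"
  shows "\<forall>t\<in>J. c t = 0"
proof (rule ccontr)
  define NZ where "NZ = {t\<in>J. c t \<noteq> 0}"
  assume "\<not> (\<forall>t\<in>J. c t = 0)"
  then have "NZ \<noteq> {}" "finite NZ"
    using assms(1) by (auto simp: NZ_def)
  then obtain t0 where t0: "t0 \<in> NZ" and max: "\<And>t. t \<in> NZ \<Longrightarrow> degree (b t) \<le> degree (b t0)"
    using Max_in[of "(\<lambda>t. degree (b t)) ` NZ"] Max_ge[of "(\<lambda>t. degree (b t)) ` NZ"] by fastforce
  have "(\<Sum>t\<in>J - {t0}. c t * coeff (b t) (degree (b t0))) = 0"
  proof (rule sum.neutral, rule ballI)
    fix t assume "t \<in> J - {t0}"
    show "c t * coeff (b t) (degree (b t0)) = 0"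
    proof (cases "t \<in> NZ")
      case True
      then have "degree (b t) < degree (b t0)"
        using max[OF True] \<open>t \<in> J - {t0}\<close> t0 assms(3) by (fastforce simp: NZ_def inj_on_def)
      then show ?thesis
        by (simp add: coeff_eq_0)
    qed (use \<open>t \<in> J - {t0}\<close> in \<open>simp add: NZ_def\<close>)
  qed
  then have "coeff (\<Sum>t\<in>J. smult (c t) (b t)) (degree (b t0)) = c t0 * lead_coeff (b t0)"
    using t0 assms(1) by (simp add: coeff_sum sum.remove[of J t0] NZ_def)
  also have "\<dots> \<noteq> 0"
    using t0 assms(2) by (simp add: NZ_def)
  finally show False
    using assms(4) by simp
qed

definition XLam_index :: "nat \<Rightarrow> nat \<Rightarrow> nat \<Rightarrow> (nat \<times> nat) set" where
  "XLam_index q k D = {(a, j). a \<le> k \<and> a + j * q < D}"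

lemma finite_XLam_index:
  assumes "0 < q"
  shows "finite (XLam_index q k D)"
proof (rule finite_subset)
  show "XLam_index q k D \<subseteq> {..k} \<times> {..<D}"
  proof (clarsimp simp: XLam_index_def)
    fix a j assume "a + j * q < D"
    moreover have "j \<le> j * q"
      using assms by simp
    ultimately show "j < D"
      by linarith
  qed
qed simp

lemma card_XLam_index:
  assumes "k < q"
  shows "k * D \<le> q * card (XLam_index q k D)"
proof -
  define J0 \<rho> where "J0 = D div q" and "\<rho> = D mod q"
  have D: "D = J0 * q + \<rho>" and "\<rho> < q"
    using assms by (simp_all add: J0_def \<rho>_def)
  define S1 S2 where "S1 = {..k} \<times> {..<J0}" and "S2 = {..<min \<rho> (k + 1)} \<times> {J0}"
  have "a + j * q < D" if "a \<le> k" "j < J0" for a j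
  proof -
    have "a + j * q < Suc j * q"
      using that assms by simp
    also have "\<dots> \<le> J0 * q"
      using that by (intro mult_right_mono) auto
    finally show ?thesis
      using D by linarith
  qed
  then have "S1 \<union> S2 \<subseteq> XLam_index q k D"
    by (auto simp: S1_def S2_def XLam_index_def D)
  have "k * \<rho> \<le> q * min \<rho> (k + 1)"
  proof (cases "\<rho> \<le> k + 1")
    case True
    then show ?thesis
      using assms by (simp add: min_def mult.commute)
  next
    case False
    have "k * \<rho> \<le> k * q"
      using \<open>\<rho> < q\<close> by simp
    also have "\<dots> \<le> q * (k + 1)"
      by simp
    finally show ?thesis
      using False by (simp add: min_def)
  qed
  then have "k * D \<le> q * ((k + 1) * J0 + min \<rho> (k + 1))"
    unfolding D by (simp add: algebra_simps)
  also have "\<dots> = q * card (S1 \<union> S2)"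
    by (subst card_Un_disjoint) (auto simp: S1_def S2_def card_cartesian_product)
  also have "\<dots> \<le> q * card (XLam_index q k D)"
    using \<open>S1 \<union> S2 \<subseteq> XLam_index q k D\<close> assms
    by (intro mult_le_mono2 card_mono finite_XLam_index) auto
  finally show ?thesis .
qed

lemma degree_XLam: "degree (XLam (a, j) :: 'a::{finite,field} poly) = a + j * CARD('a)"
  by (simp add: XLam_def degree_mult_eq degree_power_eq degree_Lam Lam_nonzero)

lemma XLam_nonzero: "XLam t \<noteq> 0"
  by (simp add: XLam_def Lam_nonzero)

lemma inj_on_degree_XLam:
  assumes "k < CARD('a::{finite,field})"
  shows "inj_on (\<lambda>t. degree (XLam t :: 'a poly)) (XLam_index CARD('a) k D)"
proof (rule inj_onI, clarify)
  fix a j a' j'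
  assume "(a, j) \<in> XLam_index CARD('a) k D" "(a', j') \<in> XLam_index CARD('a) k D"
    and "degree (XLam (a, j) :: 'a poly) = degree (XLam (a', j') :: 'a poly)"
  then have "a < CARD('a)" "a' < CARD('a)" and eq: "a + j * CARD('a) = a' + j' * CARD('a)"
    using assms by (auto simp: XLam_index_def degree_XLam)
  then have "(a + j * CARD('a)) mod CARD('a) = (a' + j' * CARD('a)) mod CARD('a)"
    by simp
  then have "a = a'"
    using \<open>a < CARD('a)\<close> \<open>a' < CARD('a)\<close> by simp
  with eq show "a = a' \<and> j = j'"
    by simp
qed

definition XLam_comb :: "nat \<Rightarrow> nat \<Rightarrow> (nat \<times> nat \<Rightarrow> 'a) \<Rightarrow> 'a::{finite,field} poly" where
  "XLam_comb k D g = (\<Sum>t\<in>XLam_index CARD('a) k D. smult (g t) (XLam t))"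

lemma degree_XLam_comb_less:
  "0 < D \<Longrightarrow> degree (XLam_comb k D g :: 'a::{finite,field} poly) < D"
  unfolding XLam_comb_def
  by (rule order.strict_trans1[of _ "D - 1"], intro degree_sum_le finite_XLam_index)
    (auto simp: XLam_index_def degree_XLam intro: order_trans[OF degree_smult_le])

lemma degree_pseudoderiv_XLam_comb:
  assumes "k < CARD('a::{finite,field})"
  shows "degree (pseudoderiv l (XLam_comb k D g :: 'a poly)) \<le> k"
  unfolding XLam_comb_def pseudoderiv_sum pseudoderiv_smult
proof (intro degree_sum_le finite_XLam_index)
  fix t assume "t \<in> XLam_index CARD('a) k D"
  then obtain a j where "t = (a, j)" "a \<le> k"
    by (auto simp: XLam_index_def)
  then have "degree (pseudoderiv l (XLam t :: 'a poly)) \<le> k"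
    using degree_pseudoderiv_XLam[where 'a='a, of a l j] assms by simp
  then show "degree (smult (g t) (pseudoderiv l (XLam t))) \<le> k"
    using degree_smult_le order_trans by blast
qed simp

lemma XLam_comb_diff: "XLam_comb k D g - XLam_comb k D g' = XLam_comb k D (\<lambda>t. g t - g' t)"
  by (simp add: XLam_comb_def sum_subtractf smult_diff_left)

lemma XLam_comb_eq_0D:
  assumes "k < CARD('a::{finite,field})" "XLam_comb k D g = (0 :: 'a poly)"
  shows "\<forall>t\<in>XLam_index CARD('a) k D. g t = 0"
  using assms
  by (intro sum_smult_distinct_degrees_eq_0D[where b = XLam] finite_XLam_index inj_on_degree_XLam)
    (auto simp: XLam_comb_def XLam_nonzero)

section \<open>Twisted Hasse derivatives\<close>

lemma exists_distinct_agreeing_if_degree_bounded: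
  fixes \<Phi> :: "'b \<Rightarrow> nat \<Rightarrow> 'a::{finite,zero} poly"
  assumes "finite X" "CARD('a) ^ (M * (d + 1)) < card X"
    and "\<And>x l. x \<in> X \<Longrightarrow> l < M \<Longrightarrow> degree (\<Phi> x l) \<le> d"
  shows "\<exists>x\<in>X. \<exists>y\<in>X. x \<noteq> y \<and> (\<forall>l<M. \<Phi> x l = \<Phi> y l)"
proof -
  define I where "I = {..<M} \<times> {..d}"
  define enc where "enc x = restrict (\<lambda>(l, e). coeff (\<Phi> x l) e) I" for x
  have "enc ` X \<subseteq> PiE I (\<lambda>_. UNIV)"
    by (auto simp: enc_def)
  moreover have "card (PiE I (\<lambda>_. UNIV :: 'a set)) < card X"
    using assms(2) by (simp add: I_def card_PiE card_cartesian_product)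
  ultimately have "\<not> inj_on enc X"
    using card_inj_on_le[of enc X "PiE I (\<lambda>_. UNIV)"] by (auto simp: I_def finite_PiE)
  then obtain x y where xy: "x \<in> X" "y \<in> X" "x \<noteq> y" "enc x = enc y"
    by (auto simp: inj_on_def)
  have "\<Phi> x l = \<Phi> y l" if "l < M" for l
  proof (rule poly_eqI)
    fix e
    show "coeff (\<Phi> x l) e = coeff (\<Phi> y l) e"
    proof (cases "e \<le> d")
      case True
      then show ?thesis
        using fun_cong[OF \<open>enc x = enc y\<close>, of "(l, e)"] that by (simp add: enc_def I_def)
    next
      case False
      then show ?thesis
        using assms(3)[of x l] assms(3)[of y l] xy that by (simp add: coeff_eq_0)
    qed
  qed
  then show ?thesis
    using xy by blast
qed

definition twisted_hasse ::
  "('i \<Rightarrow> nat \<Rightarrow> 'a poly) \<Rightarrow> 'i set \<Rightarrow> nat \<Rightarrow> ('i \<Rightarrow> 'a::{finite,field} poly) \<Rightarrow> 'a poly" where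
  "twisted_hasse U I l A = (\<Sum>i\<in>I. \<Sum>a\<le>l. pseudoderiv a (A i) * U i (l - a))"

lemma poly_hasse_sum_mult_eq_twisted_hasse:
  assumes "\<forall>i\<in>I. \<forall>l'\<le>l. poly (hasse l' (F i)) \<alpha> = \<rho> * poly (U i l') \<alpha>"
  shows "poly (hasse l (\<Sum>i\<in>I. A i * F i)) \<alpha> = \<rho> * poly (twisted_hasse U I l A) \<alpha>"
proof -
  have "poly (hasse l (\<Sum>i\<in>I. A i * F i)) \<alpha>
      = (\<Sum>i\<in>I. \<Sum>a\<le>l. poly (hasse a (A i)) \<alpha> * poly (hasse (l - a) (F i)) \<alpha>)"
    by (simp add: hasse_sum hasse_mult poly_sum)
  also have "\<dots> = (\<Sum>i\<in>I. \<Sum>a\<le>l. \<rho> * (poly (pseudoderiv a (A i)) \<alpha> * poly (U i (l - a)) \<alpha>))"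
    using assms by (intro sum.cong refl) (simp add: poly_pseudoderiv)
  also have "\<dots> = \<rho> * poly (twisted_hasse U I l A) \<alpha>"
    by (simp add: twisted_hasse_def poly_sum sum_distrib_left)
  finally show ?thesis .
qed

lemma degree_twisted_hasse_le:
  assumes "finite I" "\<forall>i\<in>I. \<forall>a. degree (pseudoderiv a (A i)) \<le> k"
    and "\<forall>i\<in>I. \<forall>l'\<le>l. degree (U i l') \<le> h"
  shows "degree (twisted_hasse U I l A) \<le> k + h"
  unfolding twisted_hasse_def
proof (intro degree_sum_le assms(1) finite_atMost)
  fix i a assume "i \<in> I" "a \<in> {..l}"
  then show "degree (pseudoderiv a (A i) * U i (l - a)) \<le> k + h"
    using assms(2,3) by (intro order_trans[OF degree_mult_le] add_mono) auto
qed

lemma twisted_hasse_diff: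
  "twisted_hasse U I l (\<lambda>i. A i - B i) = twisted_hasse U I l A - twisted_hasse U I l B"
  by (simp add: twisted_hasse_def pseudoderiv_diff left_diff_distrib sum_subtractf)

lemma exists_XLam_comb_twisted_hasse_eq_0:
  fixes U :: "'i \<Rightarrow> nat \<Rightarrow> 'a::{finite,field} poly"
  assumes "finite I" "k < CARD('a)" "\<forall>i\<in>I. \<forall>l<M. degree (U i l) \<le> h"
    and "M * (k + h + 1) < card I * card (XLam_index CARD('a) k D)"
  shows "\<exists>C. (\<forall>i\<in>I. \<exists>g. C i = XLam_comb k D g) \<and> (\<exists>i\<in>I. C i \<noteq> 0) \<and>
    (\<forall>l<M. twisted_hasse U I l C = 0)"
proof -
  define J where "J = XLam_index CARD('a) k D"
  define X where "X = PiE (I \<times> J) (\<lambda>_. UNIV :: 'a set)"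
  define comb where "comb g i = (XLam_comb k D (\<lambda>t. g (i, t)) :: 'a poly)" for g and i :: 'i
  have "finite J"
    by (simp add: J_def finite_XLam_index)
  have degree_bound: "degree (twisted_hasse U I l (comb g)) \<le> k + h" if "l < M" for g l
    using assms(1,3) that
    by (intro degree_twisted_hasse_le) (auto simp: comb_def assms(2) degree_pseudoderiv_XLam_comb)
  have "finite X"
    using assms(1) \<open>finite J\<close> by (simp add: X_def finite_PiE)
  have "CARD('a) ^ (M * (k + h + 1)) < CARD('a) ^ (card I * card J)"
    using assms(4) two_le_card_finite_field[where 'a='a] by (intro power_strict_increasing) (auto simp: J_def)
  also have "\<dots> = card X"
    using assms(1) \<open>finite J\<close> by (simp add: X_def card_PiE card_cartesian_product)
  finally have "CARD('a) ^ (M * (k + h + 1)) < card X" .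
  then obtain g g' where g: "g \<in> X" "g' \<in> X" "g \<noteq> g'"
    and agree: "\<forall>l<M. twisted_hasse U I l (comb g) = twisted_hasse U I l (comb g')"
    using exists_distinct_agreeing_if_degree_bounded[of X M "k + h" "\<lambda>g l. twisted_hasse U I l (comb g)"]
      degree_bound \<open>finite X\<close> by blast
  define C where "C i = comb g i - comb g' i" for i
  have C_eq: "C i = XLam_comb k D (\<lambda>t. g (i, t) - g' (i, t))" for i
    by (simp add: C_def comb_def XLam_comb_diff)
  obtain x where "g x \<noteq> g' x"
    using g(3) by (meson ext)
  moreover from this have "x \<in> I \<times> J"
    using g(1,2) PiE_arb[of g "I \<times> J" _ x] PiE_arb[of g' "I \<times> J" _ x] unfolding X_def by metis
  ultimately obtain i t where "i \<in> I" "t \<in> J" "g (i, t) \<noteq> g' (i, t)"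
    by auto
  then have "C i \<noteq> 0"
    using XLam_comb_eq_0D[OF assms(2)] by (fastforce simp: C_eq J_def)
  moreover have "twisted_hasse U I l C = 0" if "l < M" for l
    using agree that by (simp add: C_def [abs_def] twisted_hasse_diff)
  moreover have "\<forall>i\<in>I. \<exists>g. C i = XLam_comb k D g"
    using C_eq by blast
  ultimately show ?thesis
    using \<open>i \<in> I\<close> by blast
qed

lemma sum_mult_eq_0_if_twisted_hasse_eq_0:
  assumes "finite S" "\<forall>\<alpha>\<in>S. \<forall>i\<in>I. \<forall>l<M. poly (hasse l (F i)) \<alpha> = \<rho> \<alpha> * poly (U i l) \<alpha>"
    and "\<forall>l<M. twisted_hasse U I l A = 0" "degree (\<Sum>i\<in>I. A i * F i) < M * card S"
  shows "(\<Sum>i\<in>I. A i * F i) = 0"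
proof (rule ccontr)
  assume nonzero: "(\<Sum>i\<in>I. A i * F i) \<noteq> 0"
  have "M \<le> order \<alpha> (\<Sum>i\<in>I. A i * F i)" if "\<alpha> \<in> S" for \<alpha>
  proof -
    have "poly (hasse l (\<Sum>i\<in>I. A i * F i)) \<alpha> = 0" if "l < M" for l
      using poly_hasse_sum_mult_eq_twisted_hasse[of I l F \<alpha> "\<rho> \<alpha>" U A] assms(2,3) \<open>\<alpha> \<in> S\<close> that
      by simp
    then have "[:-\<alpha>, 1:] ^ M dvd (\<Sum>i\<in>I. A i * F i)"
      by (simp add: linear_power_dvd_if_hasse_vanish)
    then show ?thesis
      using nonzero by (simp add: order_divides)
  qed
  then have "M * card S \<le> degree (\<Sum>i\<in>I. A i * F i)"
    using nonzero assms(1) by (intro mult_card_le_degree_if_order_ge)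
  then show False
    using assms(4) by simp
qed

lemma twisted_pseudopoly_factors:
  assumes "\<forall>i\<in>I. twisted_pseudopoly (r i) h M (F i)"
  obtains U where "\<forall>i\<in>I. \<forall>l<M. degree (U i l) \<le> h \<and>
    (\<forall>\<alpha>. poly (hasse l (F i)) \<alpha> = r i \<alpha> * poly (U i l) \<alpha>)"
  using assms unfolding twisted_pseudopoly_def by metis

lemma exists_pseudopoly_syzygy:
  fixes F :: "'i \<Rightarrow> 'a::{finite,field} poly"
  assumes "finite I" "k < CARD('a)" "0 < D" "D + E \<le> M * card S"
    and "\<forall>i\<in>I. twisted_pseudopoly (r i) h M (F i)" "\<forall>\<alpha>\<in>S. \<forall>i\<in>I. r i \<alpha> = \<rho> \<alpha>"
    and "\<forall>i\<in>I. degree (F i) < E"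
    and "M * (k + h + 1) < card I * card (XLam_index CARD('a) k D)"
  shows "\<exists>A. (\<forall>i\<in>I. pseudopoly (int k) (A i) \<and> degree (A i) < D) \<and> (\<exists>i\<in>I. A i \<noteq> 0) \<and>
    (\<Sum>i\<in>I. A i * F i) = 0"
proof -
  obtain U where U: "\<forall>i\<in>I. \<forall>l<M. degree (U i l) \<le> h \<and>
      (\<forall>\<alpha>. poly (hasse l (F i)) \<alpha> = r i \<alpha> * poly (U i l) \<alpha>)"
    using twisted_pseudopoly_factors[OF assms(5)] .
  obtain A where A: "\<forall>i\<in>I. \<exists>g. A i = XLam_comb k D g" "\<exists>i\<in>I. A i \<noteq> 0"
    "\<forall>l<M. twisted_hasse U I l A = 0"
    using exists_XLam_comb_twisted_hasse_eq_0[OF assms(1,2) _ assms(8)] U by blast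
  have A_degree: "degree (A i) < D" and "pseudopoly (int k) (A i)" if "i \<in> I" for i
    using A(1) that assms(2,3)
    by (auto simp: pseudopoly_def degree_XLam_comb_less degree_pseudoderiv_XLam_comb)
  moreover have "degree (\<Sum>i\<in>I. A i * F i) < M * card S"
  proof -
    have "degree (A i * F i) \<le> M * card S - 1" if "i \<in> I" for i
      using degree_mult_le[of "A i" "F i"] A_degree[OF that] assms(4,7) that by fastforce
    then have "degree (\<Sum>i\<in>I. A i * F i) \<le> M * card S - 1"
      using assms(1) by (intro degree_sum_le)
    then show ?thesis
      using assms(3,4) by linarith
  qed
  moreover have "\<forall>\<alpha>\<in>S. \<forall>i\<in>I. \<forall>l<M. poly (hasse l (F i)) \<alpha> = \<rho> \<alpha> * poly (U i l) \<alpha>"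
    using U assms(6) by simp
  ultimately have "(\<Sum>i\<in>I. A i * F i) = 0"
    using A(3) by (intro sum_mult_eq_0_if_twisted_hasse_eq_0) auto
  with A(2) A_degree \<open>\<And>i. i \<in> I \<Longrightarrow> pseudopoly (int k) (A i)\<close> show ?thesis
    by blast
qed

section \<open>Parameter inequalities\<close>

lemma parameter_bounds:
  fixes m c h M q s n :: nat and \<gamma> :: real and k :: int
  assumes "0 < m" "0 \<le> \<gamma>" "0 < q" "s \<le> q" "real (q - s) \<le> \<gamma> * real q"
    and "real c < ((real m - 1) - real m * \<gamma>) / real m * real M"
    and "real M / ((real m - 1 - real m * \<gamma>) * real M - real m * real c) * (real h + 1)
      < real_of_int k"
  shows "2 \<le> m" "c < M" "c * q < M * s" "0 < k"
    and "nat k * (M * s - c * q) \<le> q * n \<Longrightarrow> M * (nat k + h + 1) < m * n"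
proof -
  define \<Delta> where "\<Delta> = (real m - 1 - real m * \<gamma>) * real M - real m * real c"
  have "0 < \<Delta>"
    using assms(1,6) by (simp add: \<Delta>_def field_simps)
  then have "real m * real c < (real m - real m * \<gamma>) * real M - real M"
    by (simp add: \<Delta>_def algebra_simps)
  also have "\<dots> \<le> real m * real M - real M"
    using assms(2) by (simp add: algebra_simps)
  finally have mc: "real m * real c < real m * real M - real M" .
  then have "real m * real c < real m * real M"
    using of_nat_0_le_iff[of M] by linarith
  then have "real c < real M"
    using assms(1) by (simp add: mult_less_cancel_left_pos)
  then show "c < M"
    by simp
  show "2 \<le> m"
  proof (rule ccontr)
    assume "\<not> 2 \<le> m"
    then have "m = 1"
      using assms(1) by simp
    then show False
      using mc by simp
  qed
  have "real m * (real M * real s - real c * real q) - real q * (\<Delta> + real M)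
      = real m * real M * (\<gamma> * real q - real (q - s))"
    using assms(4) by (simp add: \<Delta>_def of_nat_diff algebra_simps)
  also have "\<dots> \<ge> 0"
    using assms(5) by simp
  finally have budget: "real q * (\<Delta> + real M) \<le> real m * (real M * real s - real c * real q)"
    by simp
  moreover have "0 < real q * (\<Delta> + real M)"
    using \<open>0 < \<Delta>\<close> assms(3) by simp
  ultimately have "0 < real m * (real M * real s - real c * real q)"
    by linarith
  then have "real c * real q < real M * real s"
    by (simp add: zero_less_mult_iff)
  then show "c * q < M * s"
    by (simp flip: of_nat_mult)
  have "0 \<le> real M / \<Delta> * (real h + 1)"
    using \<open>0 < \<Delta>\<close> by simp
  then show "0 < k"
    using assms(7)[folded \<Delta>_def] by linarith
  then have k: "real (nat k) = real_of_int k"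
    by simp
  assume "nat k * (M * s - c * q) \<le> q * n"
  then have "real (nat k * (M * s - c * q)) \<le> real (q * n)"
    by (simp only: of_nat_le_iff)
  then have kD: "real (nat k) * (real M * real s - real c * real q) \<le> real q * real n"
    using \<open>c * q < M * s\<close> by (simp add: of_nat_diff)
  have "real q * (real (nat k) * (\<Delta> + real M)) = real (nat k) * (real q * (\<Delta> + real M))"
    by (simp add: algebra_simps)
  also have "\<dots> \<le> real (nat k) * (real m * (real M * real s - real c * real q))"
    using budget by (intro mult_left_mono) auto
  also have "\<dots> = real m * (real (nat k) * (real M * real s - real c * real q))"
    by (simp add: algebra_simps)
  also have "\<dots> \<le> real m * (real q * real n)"
    using kD by (intro mult_left_mono) auto
  finally have "real q * (real (nat k) * (\<Delta> + real M)) \<le> real q * (real m * real n)"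
    by (simp add: algebra_simps)
  then have count: "real (nat k) * (\<Delta> + real M) \<le> real m * real n"
    using assms(3) by simp
  have "real M * (real h + 1) < real (nat k) * \<Delta>"
    using assms(7)[folded \<Delta>_def] \<open>0 < \<Delta>\<close> k by (simp add: field_simps)
  then have "real (M * (nat k + h + 1)) < real (nat k) * (\<Delta> + real M)"
    by (simp add: algebra_simps)
  also have "\<dots> \<le> real (m * n)"
    using count by simp
  finally show "M * (nat k + h + 1) < m * n"
    by (simp only: of_nat_less_iff)
qed

theorem lemma5p8:
  fixes r :: "nat \<Rightarrow> 'a::{finite,field} \<Rightarrow> 'a"
    and F :: "nat \<Rightarrow> 'a poly"
    and m c h M :: nat and \<gamma> :: real and k :: int
  assumes "m > 0" "c > 0" "h > 0" "M > 0" "\<gamma> \<ge> 0"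
    and "real c < ((real m - 1) - real m * \<gamma>) / real m * real M"
    and "real (card {\<alpha>::'a. \<exists>i\<in>{1..m}. \<exists>j\<in>{1..m}. r i \<alpha> \<noteq> r j \<alpha>})
           \<le> \<gamma> * real CARD('a)"
    and "\<forall>i\<in>{1..m}. degree (F i) < c * CARD('a)"
    and "\<forall>i\<in>{1..m}. twisted_pseudopoly (r i) h M (F i)"
    and "real_of_int k > real M / ((real m - 1 - real m * \<gamma>) * real M - real m * real c)
                          * (real h + 1)"
  shows "\<exists>A :: nat \<Rightarrow> 'a poly.
           (\<forall>i\<in>{1..m}. pseudopoly k (A i) \<and> degree (A i) < M * CARD('a)) \<and>
           (\<exists>i\<in>{1..m}. A i \<noteq> 0) \<and>
           (\<Sum>i=1..m. A i * F i) = 0"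
proof -
  define Bad where "Bad = {\<alpha>::'a. \<exists>i\<in>{1..m}. \<exists>j\<in>{1..m}. r i \<alpha> \<noteq> r j \<alpha>}"
  define S where "S = UNIV - Bad"
  have "card S = CARD('a) - card Bad" "card Bad \<le> CARD('a)"
    by (simp_all add: S_def card_Diff_subset card_mono)
  then have "card S \<le> CARD('a)" "real (CARD('a) - card S) \<le> \<gamma> * real CARD('a)"
    using assms(7)[folded Bad_def] by simp_all
  note bounds = parameter_bounds[OF assms(1,5) zero_less_card_finite this assms(6,10)]
  then have "1 \<in> {1..m}" "2 \<in> {1..m}"
    by simp_all
  show ?thesis
  proof (cases "int CARD('a) - 1 \<le> k")
    case True
    have "\<forall>i\<in>{1..m}. degree (F i) < M * CARD('a)"
      using assms(8) bounds(2) by (meson less_le_trans mult_le_mono1 less_imp_le)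
    with exists_syzygy_of_two[OF finite_atLeastAtMost \<open>1 \<in> {1..m}\<close> \<open>2 \<in> {1..m}\<close>]
    show ?thesis
      using pseudopoly_if_card_le[OF True] by simp
  next
    case False
    then have "nat k < CARD('a)"
      by (cases "0 \<le> k") (simp_all add: nat_less_iff)
    define D where "D = M * card S - c * CARD('a)"
    have D: "0 < D" "D + c * CARD('a) \<le> M * card S"
      using bounds(3) by (simp_all add: D_def)
    have "D \<le> M * CARD('a)"
      using \<open>card S \<le> CARD('a)\<close> by (simp add: D_def le_trans[OF diff_le_self])
    have "M * (nat k + h + 1) < card {1..m} * card (XLam_index CARD('a) (nat k) D)"
      using bounds(5) card_XLam_index[OF \<open>nat k < CARD('a)\<close>] by (simp add: D_def)
    moreover have "\<forall>\<alpha>\<in>S. \<forall>i\<in>{1..m}. r i \<alpha> = r 1 \<alpha>"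
      using \<open>1 \<in> {1..m}\<close> unfolding S_def Bad_def by blast
    ultimately obtain A where "\<forall>i\<in>{1..m}. pseudopoly (int (nat k)) (A i) \<and> degree (A i) < D"
      "\<exists>i\<in>{1..m}. A i \<noteq> 0" "(\<Sum>i=1..m. A i * F i) = 0"
      using exists_pseudopoly_syzygy[OF finite_atLeastAtMost \<open>nat k < CARD('a)\<close> D assms(9)]
        assms(8) by blast
    then show ?thesis
      using \<open>D \<le> M * CARD('a)\<close> bounds(4) by (intro exI[of _ A]) auto
  qed
qed

end
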